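(* Let $3\leq m\leq n$, $\ell=m-1$, $p=(m-1)n$, and $Y=(Y_1;\ldots;Y_\ell)\in\mathbb{R}^{n\times n\times\ell}$. Then $\operatorname{rank} X(Y)=p$ if and only if $Y\in\mathfrak{M}$.
   Context: An $m_1\times m_2\times m_3$ tensor $(x_{ijk})$ is written $(X_1;\ldots;X_{m_3})$ with $X_t=(x_{ijt})$ an $m_1\times m_2$ matrix; rank is real tensor rank (minimal number of real rank-one tensors $\mathbf{x}\otimes\mathbf{y}\otimes\mathbf{z}$ summing to the tensor). $E_n$ is the $n\times n$ identity. For $Y=(Y_1;\ldots;Y_\ell)\in\mathbb{R}^{n\times n\times\ell}$, $X(Y)=(X_1;\ldots;X_m)$ is the $n\times p\times m$ tensor whose slices are: for $1\leq k\leq\ell$, $X_k$ is the $n\times p$ block row having $E_n$ in the $k$-th $n\times n$ block and zero blocks elsewhere, and $X_m=(Y_1,Y_2,\ldots,Y_\ell)$; i.e. stacking $X_1,\ldots,X_m$ vertically gives $\begin{pmatrix}E_p\\ Y_1\ \cdots\ Y_\ell\end{pmatrix}$. $\mathfrak{M}$ is the set of $Y\in\mathbb{R}^{n\times n\times\ell}$ for which there exist a real $m\times p$ matrix $(x_{ij})$ and a real $n\times p$ matrix $A=(\mathbf{a}_1,\ldots,\mathbf{a}_p)$ such that $(x_{1j}Y_1+\cdots+x_{\ell j}Y_\ell-x_{mj}E_n)\mathbf{a}_j=\mathbf{0}$ for $1\leq j\leq p$ and the $p\times p$ matrix $B=\begin{pmatrix}AD_1\\ \vdots\\ AD_\ell\end{pmatrix}$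 is nonsingular, where $D_k=\operatorname{diag}(x_{k1},\ldots,x_{kp})$. *)

theory Defs
  imports "Jordan_Normal_Form.Determinant"
begin

text \<open>Tensors are represented as functions \<open>nat \<Rightarrow> nat \<Rightarrow> nat \<Rightarrow> real\<close>
  (0-indexed), only the entries inside the stated dimensions matter.\<close>

definition tensor_rank_le :: "nat \<Rightarrow> nat \<Rightarrow> nat \<Rightarrow> (nat \<Rightarrow> nat \<Rightarrow> nat \<Rightarrow> real) \<Rightarrow> nat \<Rightarrow> bool" where
  "tensor_rank_le d1 d2 d3 T r \<longleftrightarrow>
     (\<exists>(x::nat \<Rightarrow> nat \<Rightarrow> real) (y::nat \<Rightarrow> nat \<Rightarrow> real) (z::nat \<Rightarrow> nat \<Rightarrow> real).
        \<forall>i<d1. \<forall>j<d2. \<forall>k<d3. T i j k = (\<Sum>s<r. x s i * y s j * z s k))"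

definition tensor_rank :: "nat \<Rightarrow> nat \<Rightarrow> nat \<Rightarrow> (nat \<Rightarrow> nat \<Rightarrow> nat \<Rightarrow> real) \<Rightarrow> nat" where
  "tensor_rank d1 d2 d3 T = (LEAST r. tensor_rank_le d1 d2 d3 T r)"

text \<open>\<open>Y t i j\<close> is entry \<open>(i,j)\<close> of slice \<open>Y_(t+1)\<close>, \<open>t < l\<close>.
  \<open>XY n l Y\<close> is the \<open>n \<times> (l n) \<times> (l+1)\<close> tensor \<open>X(Y)\<close>: slice \<open>k < l\<close> has \<open>E_n\<close>
  in the k-th block, slice \<open>l\<close> is \<open>(Y_1,\<dots>,Y_l)\<close>.\<close>
definition XY :: "nat \<Rightarrow> nat \<Rightarrow> (nat \<Rightarrow> nat \<Rightarrow> nat \<Rightarrow> real) \<Rightarrow> (nat \<Rightarrow> nat \<Rightarrow> nat \<Rightarrow> real)" where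
  "XY n l Y = (\<lambda>i j k. if k < l then (if j = k * n + i then 1 else 0)
                        else Y (j div n) i (j mod n))"

text \<open>The set \<open>frak M\<close> (with \<open>m = l+1\<close>, \<open>p = l n\<close>), 0-indexed: row \<open>l\<close> of x is the paper's row m.\<close>
definition setM :: "nat \<Rightarrow> nat \<Rightarrow> (nat \<Rightarrow> nat \<Rightarrow> nat \<Rightarrow> real) set" where
  "setM n l = {Y. \<exists>(x::nat \<Rightarrow> nat \<Rightarrow> real) (A::nat \<Rightarrow> nat \<Rightarrow> real).
      (\<forall>j<l*n. \<forall>i<n.
          (\<Sum>r<n. ((\<Sum>k<l. x k j * Y k i r) - x l j * (if i = r then 1 else 0)) * A r j) = 0)
    \<and> det (mat (l*n) (l*n) (\<lambda>(r, j). A (r mod n) j * x (r div n) j)) \<noteq> 0}"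

end

theory Submission
  imports Defs
begin

(* Put p = l n and index the columns of a p-term decomposition
   T = sum_s a_s (x) v_s (x) c_s of X(Y) by s.  The first l slices of X(Y) stack to the
   p x p identity, so the decomposition says exactly
     (1) B V = E_p, where B is the Khatri-Rao matrix whose s-th column is c_s (x) a_s
         (restricted to the first l coordinates of c_s) and V has rows v_s, and
     (2) (Y_1,...,Y_l) = A D V, where A has columns a_s and D = diag(c_{m,s}).
   Given (1), condition (2) is equivalent to (Y_1,...,Y_l) B = A D, which column by
   column is the kernel condition defining the set M, while (1) says B is invertible.
   Hence rank X(Y) <= p iff Y is in M.  Finally no decomposition has fewer than p terms:
   padding it with zero terms would give (1) with a singular V. *)

lemma sum_blocks:
  fixes f :: "nat \<Rightarrow> 'a::comm_monoid_add"
  shows "(\<Sum>j<l*n. f j) = (\<Sum>k<l. \<Sum>r<n. f (k*n + r))"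
proof -
  have "(\<Sum>j<l*n. f j) = (\<Sum>k<l. \<Sum>j\<in>{k*n..<k*n+n}. f j)"
    using sum.nat_group[of f n l] by simp
  also have "\<dots> = (\<Sum>k<l. \<Sum>r<n. f (k*n + r))"
  proof (rule sum.cong[OF refl])
    fix k
    show "(\<Sum>j\<in>{k*n..<k*n+n}. f j) = (\<Sum>r<n. f (k*n + r))"
      using sum.shift_bounds_nat_ivl[of f 0 "k*n" n] by (simp add: atLeast0LessThan add.commute)
  qed
  finally show ?thesis .
qed

lemma mult_mat_entry:
  assumes "A \<in> carrier_mat m q" "B \<in> carrier_mat q k" "i < m" "j < k"
  shows "(A * B) $$ (i, j) = (\<Sum>s<q. A $$ (i, s) * B $$ (s, j))"
  using assms by (simp add: scalar_prod_def atLeast0LessThan)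

lemma mat_eq_entrywise:
  assumes "M \<in> carrier_mat q k" "N \<in> carrier_mat q k"
  shows "M = N \<longleftrightarrow> (\<forall>i<q. \<forall>j<k. M $$ (i, j) = N $$ (i, j))"
  using assms by (auto intro: eq_matI)

lemma det_zero_row:
  assumes V: "V \<in> carrier_mat p p" and k: "k < p" and zero: "\<And>j. j < p \<Longrightarrow> V $$ (k, j) = 0"
  shows "det V = 0"
proof -
  have "V = mat\<^sub>r p p (\<lambda>i. if i = k then 0\<^sub>v p else row V i)"
    by (rule eq_matI) (use V zero in auto)
  also have "det \<dots> = 0"
    by (rule det_row_0[OF k]) (use V in auto)
  finally show ?thesis .
qed

lemma mult_right_inverse_iff:
  fixes B V :: "'a::field mat"
  assumes B: "B \<in> carrier_mat p p" and V: "V \<in> carrier_mat p p" and BV: "B * V = 1\<^sub>m p"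
    and M: "M \<in> carrier_mat q p" and N: "N \<in> carrier_mat q p"
  shows "M = N * V \<longleftrightarrow> M * B = N"
proof
  have VB: "V * B = 1\<^sub>m p" by (rule mat_mult_left_right_inverse[OF B V BV])
  assume "M = N * V"
  then show "M * B = N" using N V B VB by simp
next
  assume MB: "M * B = N"
  have "M = M * (B * V)" using M BV by simp
  also have "\<dots> = N * V" using M B V MB by (simp flip: assoc_mult_mat)
  finally show "M = N * V" .
qed

text \<open>A tensor of format \<open>d1 \<times> d2 \<times> d3\<close> is a sum of \<open>d2 d3\<close> rank-one tensors,
  one per entry of its second and third index; so its rank is well defined.\<close>
lemma tensor_rank_le_exists: "\<exists>r. tensor_rank_le d1 d2 d3 T r"
proof -
  define x where "x = (\<lambda>s i. T i (s mod d2) (s div d2))"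
  define y where "y = (\<lambda>s j. if j = s mod d2 then 1 else (0::real))"
  define z where "z = (\<lambda>s k. if k = s div d2 then 1 else (0::real))"
  have "T i j k = (\<Sum>s<d3*d2. x s i * y s j * z s k)" if "j < d2" "k < d3" for i j k
  proof -
    have "(\<Sum>s<d3*d2. x s i * y s j * z s k)
        = (\<Sum>k'<d3. \<Sum>r<d2. if k' = k then (if r = j then T i j k else 0) else 0)"
      unfolding sum_blocks by (intro sum.cong refl) (auto simp: x_def y_def z_def)
    also have "\<dots> = (\<Sum>k'<d3. if k' = k then T i j k else 0)"
      using that by (intro sum.cong refl) simp
    also have "\<dots> = T i j k" using that by simp
    finally show ?thesis by simp
  qed
  then show ?thesis unfolding tensor_rank_le_def by blast
qed

lemma tensor_rank_eq_iff:
  assumes lower: "\<And>r. tensor_rank_le d1 d2 d3 T r \<Longrightarrow> q \<le> r"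
  shows "tensor_rank d1 d2 d3 T = q \<longleftrightarrow> tensor_rank_le d1 d2 d3 T q"
proof -
  have attained: "tensor_rank_le d1 d2 d3 T (tensor_rank d1 d2 d3 T)"
    unfolding tensor_rank_def using tensor_rank_le_exists by (rule LeastI_ex)
  show ?thesis
  proof
    assume "tensor_rank_le d1 d2 d3 T q"
    then have "tensor_rank d1 d2 d3 T \<le> q"
      unfolding tensor_rank_def by (rule Least_le)
    with lower[OF attained] show "tensor_rank d1 d2 d3 T = q" by simp
  qed (use attained in simp)
qed

section \<open>The matrices attached to a decomposition of \<open>X(Y)\<close>\<close>

text \<open>It is the matrix \<open>B\<close> in the definition of \<open>M\<close>.\<close>
definition khatri_rao :: "nat \<Rightarrow> nat \<Rightarrow> (nat \<Rightarrow> nat \<Rightarrow> real) \<Rightarrow> (nat \<Rightarrow> nat \<Rightarrow> real) \<Rightarrow> real mat" where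
  "khatri_rao n p a c = mat p p (\<lambda>(r, s). a (r mod n) s * c (r div n) s)"

definition block_row :: "nat \<Rightarrow> nat \<Rightarrow> (nat \<Rightarrow> nat \<Rightarrow> nat \<Rightarrow> real) \<Rightarrow> real mat" where
  "block_row n l Y = mat n (l*n) (\<lambda>(i, j). Y (j div n) i (j mod n))"

definition col_scaled :: "nat \<Rightarrow> nat \<Rightarrow> (nat \<Rightarrow> nat \<Rightarrow> real) \<Rightarrow> (nat \<Rightarrow> real) \<Rightarrow> real mat" where
  "col_scaled n p a w = mat n p (\<lambda>(i, s). w s * a i s)"

lemma khatri_rao_carrier [simp]: "khatri_rao n p a c \<in> carrier_mat p p"
  by (simp add: khatri_rao_def)

lemma block_row_carrier [simp]: "block_row n l Y \<in> carrier_mat n (l*n)"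
  by (simp add: block_row_def)

lemma col_scaled_carrier [simp]: "col_scaled n p a w \<in> carrier_mat n p"
  by (simp add: col_scaled_def)

lemma khatri_rao_mult_entry:
  assumes V: "V \<in> carrier_mat p p" and "i < n" "k*n + i < p" "j < p"
  shows "(khatri_rao n p a c * V) $$ (k*n + i, j) = (\<Sum>s<p. a i s * V $$ (s, j) * c k s)"
  using assms by (subst mult_mat_entry[OF khatri_rao_carrier V]) (auto simp: khatri_rao_def mult_ac)

lemma identity_slices_iff:
  assumes V: "V \<in> carrier_mat (l*n) (l*n)"
  shows "(\<forall>i<n. \<forall>j<l*n. \<forall>k<l. XY n l Y i j k = (\<Sum>s<l*n. a i s * V $$ (s, j) * c k s))
     \<longleftrightarrow> khatri_rao n (l*n) a c * V = 1\<^sub>m (l*n)"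
    (is "?slices \<longleftrightarrow> ?inverse")
proof
  assume ?slices
  show ?inverse
  proof (rule eq_matI)
    fix r j assume "r < dim_row (1\<^sub>m (l*n))" "j < dim_col (1\<^sub>m (l*n))"
    then have r: "r < l*n" and j: "j < l*n" by auto
    then have "0 < n" by (cases n) auto
    then have n: "r mod n < n" and k: "r div n < l"
      using r by (auto simp: less_mult_imp_div_less)
    have r_eq: "r = (r div n) * n + r mod n" by simp
    have "(khatri_rao n (l*n) a c * V) $$ (r, j) = XY n l Y (r mod n) j (r div n)"
      using khatri_rao_mult_entry[OF V n _ j, of "r div n" a c] r \<open>?slices\<close> n j k
      by (simp flip: r_eq)
    also have "\<dots> = 1\<^sub>m (l*n) $$ (r, j)"
      using k r j by (auto simp: XY_def)
    finally show "(khatri_rao n (l*n) a c * V) $$ (r, j) = 1\<^sub>m (l*n) $$ (r, j)" .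
  qed (use V in \<open>auto simp: khatri_rao_def\<close>)
next
  assume ?inverse
  show ?slices
  proof (intro allI impI)
    fix i j k assume i: "i < n" and j: "j < l*n" and k: "k < l"
    have r: "k*n + i < l*n"
    proof -
      have "k*n + i < Suc k * n" using i by simp
      also have "\<dots> \<le> l*n" using k by (intro mult_right_mono) auto
      finally show ?thesis .
    qed
    have "XY n l Y i j k = 1\<^sub>m (l*n) $$ (k*n + i, j)"
      using k r j by (auto simp: XY_def)
    also have "\<dots> = (\<Sum>s<l*n. a i s * V $$ (s, j) * c k s)"
      using khatri_rao_mult_entry[OF V i r j, of a c] \<open>?inverse\<close> by simp
    finally show "XY n l Y i j k = (\<Sum>s<l*n. a i s * V $$ (s, j) * c k s)" .
  qed
qed

lemma last_slice_iff:
  assumes V: "V \<in> carrier_mat (l*n) (l*n)"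
  shows "(\<forall>i<n. \<forall>j<l*n. XY n l Y i j l = (\<Sum>s<l*n. a i s * V $$ (s, j) * c l s))
     \<longleftrightarrow> block_row n l Y = col_scaled n (l*n) a (c l) * V"
proof -
  have entry: "(col_scaled n (l*n) a (c l) * V) $$ (i, j) = (\<Sum>s<l*n. a i s * V $$ (s, j) * c l s)"
    if "i < n" "j < l*n" for i j
    using that by (subst mult_mat_entry[OF col_scaled_carrier V]) (auto simp: col_scaled_def mult_ac)
  have "block_row n l Y = col_scaled n (l*n) a (c l) * V
      \<longleftrightarrow> (\<forall>i<n. \<forall>j<l*n. block_row n l Y $$ (i, j) = (col_scaled n (l*n) a (c l) * V) $$ (i, j))"
    by (intro mat_eq_entrywise mult_carrier_mat) (use V in auto)
  also have "\<dots> \<longleftrightarrow> (\<forall>i<n. \<forall>j<l*n. XY n l Y i j l = (\<Sum>s<l*n. a i s * V $$ (s, j) * c l s))"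
    by (simp add: entry XY_def block_row_def)
  finally show ?thesis by simp
qed

lemma decomposition_iff:
  assumes V: "V \<in> carrier_mat (l*n) (l*n)"
  shows "(\<forall>i<n. \<forall>j<l*n. \<forall>k<Suc l. XY n l Y i j k = (\<Sum>s<l*n. a i s * V $$ (s, j) * c k s))
     \<longleftrightarrow> khatri_rao n (l*n) a c * V = 1\<^sub>m (l*n)
       \<and> block_row n l Y = col_scaled n (l*n) a (c l) * V"
proof -
  have "(\<forall>i<n. \<forall>j<l*n. \<forall>k<Suc l. XY n l Y i j k = (\<Sum>s<l*n. a i s * V $$ (s, j) * c k s))
    \<longleftrightarrow> (\<forall>i<n. \<forall>j<l*n. \<forall>k<l. XY n l Y i j k = (\<Sum>s<l*n. a i s * V $$ (s, j) * c k s))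
      \<and> (\<forall>i<n. \<forall>j<l*n. XY n l Y i j l = (\<Sum>s<l*n. a i s * V $$ (s, j) * c l s))"
    unfolding All_less_Suc by blast
  then show ?thesis
    by (simp only: identity_slices_iff[OF V] last_slice_iff[OF V])
qed

section \<open>The set \<open>M\<close> in matrix language\<close>

lemma kernel_sum_eq:
  assumes i: "i < n" and j: "j < l*n"
  shows "(\<Sum>r<n. ((\<Sum>k<l. c k j * Y k i r) - c l j * (if i = r then 1 else 0)) * a r j)
       = (block_row n l Y * khatri_rao n (l*n) a c) $$ (i, j) - col_scaled n (l*n) a (c l) $$ (i, j)"
proof -
  have product: "(block_row n l Y * khatri_rao n (l*n) a c) $$ (i, j)
      = (\<Sum>r<n. (\<Sum>k<l. c k j * Y k i r) * a r j)"
  proof -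
    have "(block_row n l Y * khatri_rao n (l*n) a c) $$ (i, j)
        = (\<Sum>k<l. \<Sum>r<n. Y k i r * (a r j * c k j))"
      using i j by (subst mult_mat_entry[OF block_row_carrier khatri_rao_carrier])
        (auto simp: sum_blocks block_row_def khatri_rao_def)
    also have "\<dots> = (\<Sum>r<n. (\<Sum>k<l. c k j * Y k i r) * a r j)"
      by (subst sum.swap) (simp add: sum_distrib_left sum_distrib_right mult_ac)
    finally show ?thesis .
  qed
  have diagonal: "(\<Sum>r<n. c l j * (if i = r then 1 else 0) * a r j) = col_scaled n (l*n) a (c l) $$ (i, j)"
  proof -
    have "(\<Sum>r<n. c l j * (if i = r then 1 else 0) * a r j) = (\<Sum>r<n. if r = i then c l j * a i j else 0)"
      by (intro sum.cong) auto
    then show ?thesis using i j by (simp add: col_scaled_def)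
  qed
  show ?thesis
    using product diagonal by (simp add: left_diff_distrib sum_subtractf)
qed

lemma setM_iff:
  "Y \<in> setM n l \<longleftrightarrow> (\<exists>a c. det (khatri_rao n (l*n) a c) \<noteq> 0
       \<and> block_row n l Y * khatri_rao n (l*n) a c = col_scaled n (l*n) a (c l))"
proof -
  have kernel: "(\<forall>j<l*n. \<forall>i<n.
        (\<Sum>r<n. ((\<Sum>k<l. c k j * Y k i r) - c l j * (if i = r then 1 else 0)) * a r j) = 0)
      \<longleftrightarrow> block_row n l Y * khatri_rao n (l*n) a c = col_scaled n (l*n) a (c l)" for a c
    by (subst mat_eq_entrywise[OF mult_carrier_mat[OF block_row_carrier khatri_rao_carrier]
          col_scaled_carrier]) (auto simp: kernel_sum_eq)
  show ?thesis
    unfolding setM_def mem_Collect_eq kernel by (unfold khatri_rao_def) blast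
qed

lemma tensor_rank_le_iff_setM:
  "tensor_rank_le n (l*n) (Suc l) (XY n l Y) (l*n) \<longleftrightarrow> Y \<in> setM n l"
proof
  assume "tensor_rank_le n (l*n) (Suc l) (XY n l Y) (l*n)"
  then obtain x y z where dec:
    "\<forall>i<n. \<forall>j<l*n. \<forall>k<Suc l. XY n l Y i j k = (\<Sum>s<l*n. x s i * y s j * z s k)"
    unfolding tensor_rank_le_def by blast
  define a where "a = (\<lambda>i s. x s i)"
  define c where "c = (\<lambda>k s. z s k)"
  define V where "V = mat (l*n) (l*n) (\<lambda>(s, j). y s j)"
  have V: "V \<in> carrier_mat (l*n) (l*n)" by (simp add: V_def)
  have BV: "khatri_rao n (l*n) a c * V = 1\<^sub>m (l*n)"
    and last: "block_row n l Y = col_scaled n (l*n) a (c l) * V"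
    using dec decomposition_iff[OF V, of Y a c] by (simp_all add: a_def c_def V_def)
  have "det (khatri_rao n (l*n) a c) \<noteq> 0"
    using det_mult[OF khatri_rao_carrier[of n _ a c] V] BV by auto
  moreover have "block_row n l Y * khatri_rao n (l*n) a c = col_scaled n (l*n) a (c l)"
    using mult_right_inverse_iff[OF khatri_rao_carrier V BV block_row_carrier col_scaled_carrier] last
    by blast
  ultimately show "Y \<in> setM n l"
    unfolding setM_iff by blast
next
  assume "Y \<in> setM n l"
  then obtain a c where det: "det (khatri_rao n (l*n) a c) \<noteq> 0"
    and kernel: "block_row n l Y * khatri_rao n (l*n) a c = col_scaled n (l*n) a (c l)"
    unfolding setM_iff by blast
  obtain V where V: "V \<in> carrier_mat (l*n) (l*n)" and BV: "khatri_rao n (l*n) a c * V = 1\<^sub>m (l*n)"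
    using det_non_zero_imp_unit[OF khatri_rao_carrier det, of "()"]
    unfolding Units_def ring_mat_simps by auto
  have "block_row n l Y = col_scaled n (l*n) a (c l) * V"
    using mult_right_inverse_iff[OF khatri_rao_carrier V BV block_row_carrier col_scaled_carrier] kernel
    by simp
  with BV have "\<forall>i<n. \<forall>j<l*n. \<forall>k<Suc l. XY n l Y i j k = (\<Sum>s<l*n. a i s * V $$ (s, j) * c k s)"
    using decomposition_iff[OF V] by blast
  then show "tensor_rank_le n (l*n) (Suc l) (XY n l Y) (l*n)"
    unfolding tensor_rank_le_def by (intro exI[of _ "\<lambda>s i. a i s"] exI[of _ "\<lambda>s j. V $$ (s, j)"]
        exI[of _ "\<lambda>s k. c k s"]) simp
qed

text \<open>Lower bound \<open>rank X(Y) \<ge> p\<close>: padding a shorter decomposition with zero terms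
  yields a right inverse of a Khatri-Rao matrix having a zero row.\<close>
lemma tensor_rank_lower_bound:
  assumes "tensor_rank_le n (l*n) (Suc l) (XY n l Y) r"
  shows "l*n \<le> r"
proof (rule ccontr)
  assume "\<not> l*n \<le> r"
  then have r: "r < l*n" by simp
  obtain x y z where dec:
    "\<forall>i<n. \<forall>j<l*n. \<forall>k<Suc l. XY n l Y i j k = (\<Sum>s<r. x s i * y s j * z s k)"
    using assms unfolding tensor_rank_le_def by blast
  define V where "V = mat (l*n) (l*n) (\<lambda>(s, j). if s < r then y s j else 0)"
  have V: "V \<in> carrier_mat (l*n) (l*n)" by (simp add: V_def)
  have padded: "(\<Sum>s<l*n. x s i * V $$ (s, j) * z s k) = (\<Sum>s<r. x s i * y s j * z s k)"
    if "j < l*n" for i j k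
    using that r by (intro sum.mono_neutral_cong_right) (auto simp: V_def)
  have "khatri_rao n (l*n) (\<lambda>i s. x s i) (\<lambda>k s. z s k) * V = 1\<^sub>m (l*n)"
    using decomposition_iff[OF V, of Y "\<lambda>i s. x s i" "\<lambda>k s. z s k"] dec padded by simp
  then have "det (khatri_rao n (l*n) (\<lambda>i s. x s i) (\<lambda>k s. z s k)) * det V = 1"
    using det_mult[OF khatri_rao_carrier[of n _ "\<lambda>i s. x s i" "\<lambda>k s. z s k"] V] by simp
  moreover have "det V = 0"
    by (rule det_zero_row[OF V, of "l*n - 1"]) (use r in \<open>auto simp: V_def\<close>)
  ultimately show False by simp
qed

theorem mainTheorem4:
  fixes m n l p :: nat and Y :: "nat \<Rightarrow> nat \<Rightarrow> nat \<Rightarrow> real"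
  assumes "3 \<le> m" and "m \<le> n" and "l = m - 1" and "p = (m - 1) * n"
  shows "tensor_rank n p m (XY n l Y) = p \<longleftrightarrow> Y \<in> setM n l"
proof -
  have m: "m = Suc l" and p: "p = l*n" using assms by auto
  have "tensor_rank n (l*n) (Suc l) (XY n l Y) = l*n
      \<longleftrightarrow> tensor_rank_le n (l*n) (Suc l) (XY n l Y) (l*n)"
    by (rule tensor_rank_eq_iff) (rule tensor_rank_lower_bound)
  also have "\<dots> \<longleftrightarrow> Y \<in> setM n l"
    by (rule tensor_rank_le_iff_setM)
  finally show ?thesis unfolding m p .
qed

end
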